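(* Let $Z_1,\ldots,Z_{n+1}$ be i.i.d. from an arbitrary distribution $\mathcal P$, let $V$ be a fixed score function and $\alpha\in(0,1)$. Fix a grid $0\le a_1<\cdots<a_M\le 1$ and let $\tilde\alpha$ be the smallest grid value $a_m$ such that, with $\tilde\alpha=a_m$, either $\bar v^*:=Q(\tilde\alpha;\hat{\mathcal F})=\infty$ or condition (G2) holds (assume such a grid value always exists, e.g. $a_M=1$). Let $\widehat C(X_{n+1})=\{y\in\mathbb R: V(X_{n+1},y)\le Q(\tilde\alpha;\hat{\mathcal F})\}$. Then $\mathbb P\{Y_{n+1}\in\widehat C(X_{n+1})\}\ge\alpha$.
   Context: Data: $Z_i=(X_i,Y_i)\in\mathbb R^p\times\mathbb R$, $i=1,\ldots,n+1$; $X=\{X_1,\ldots,X_{n+1}\}$ (unordered). A localizer is a function $H(x_1,x_2,X)\in[0,1]$ of $x_1,x_2\in\mathbb R^p$ and of the unordered set $X$, satisfying $H(x,x,X)=1$ for all $x$. Write $H_{i,j}=H(X_i,X_j,X)$ and $p^H_{i,j}=H_{i,j}/\sum_{k=1}^{n+1}H_{i,k}$. For a probability distribution $\mathcal F$ on $\mathbb R\cup\{\infty\}$ and $a\in[0,1]$, $Q(a;\mathcal F)=\inf\{t:\mathbb P_{T\sim\mathcal F}(T\le t)\ge a\}$; $\delta_v$ denotes the point mass at $v$. A fixed score function is a deterministic measurable $V:\mathbb R^p\times\mathbb R\to[0,\infty)$ not depending on the data; $V_i=V(Z_i)$. Define $\hat{\mathcal F}=\sum_{j=1}^{n}p^H_{n+1,j}\delta_{V_j}+p^H_{n+1,n+1}\delta_{\infty}$.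 For a level $\tilde\alpha$, let $v^*_{i1}=Q(\tilde\alpha;\sum_{j=1}^n p^H_{i,j}\delta_{V_j}+p^H_{i,n+1}\delta_{\bar v^*})$ and $v^*_{i2}=Q(\tilde\alpha;\sum_{j=1}^n p^H_{i,j}\delta_{V_j}+p^H_{i,n+1}\delta_{0})$ for $i=1,\ldots,n$. Condition (G2): $\frac{1}{n+1}\sum_{i=1}^n\mathbb 1\{V_i\le v^*_{i1}\}\ge\alpha$ and $\frac{1}{n+1}\sum_{i=1}^n\mathbb 1\{V_i\le v^*_{i2}\}+\frac{1}{n+1}\ge\alpha$. *)

theory Defs
  imports "HOL-Probability.Probability" "HOL-Library.Multiset"
begin

text \<open>Finite discrete distributions on the extended reals, given by an index set I,
  weights w and atoms v: the distribution sum over j in I of w j times delta at v j.\<close>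

definition wcdf :: "'i set \<Rightarrow> ('i \<Rightarrow> real) \<Rightarrow> ('i \<Rightarrow> ereal) \<Rightarrow> ereal \<Rightarrow> real" where
  "wcdf I w v t = (\<Sum>j\<in>I. if v j \<le> t then w j else 0)"

definition Qf :: "real \<Rightarrow> 'i set \<Rightarrow> ('i \<Rightarrow> real) \<Rightarrow> ('i \<Rightarrow> ereal) \<Rightarrow> ereal" where
  "Qf a I w v = Inf {t. a \<le> wcdf I w v t}"

definition is_localizer :: "('x \<Rightarrow> 'x \<Rightarrow> 'x multiset \<Rightarrow> real) \<Rightarrow> bool" where
  "is_localizer H \<longleftrightarrow> (\<forall>x1 x2 X. 0 \<le> H x1 x2 X \<and> H x1 x2 X \<le> 1) \<and> (\<forall>x X. H x x X = 1)"

text \<open>The data are \<omega> i = Z_i = (X_i, Y_i), i = 1..n+1.\<close>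
definition sampleX :: "nat \<Rightarrow> (nat \<Rightarrow> 'x \<times> real) \<Rightarrow> 'x multiset" where
  "sampleX n \<omega> = image_mset (\<lambda>k. fst (\<omega> k)) (mset_set {1..n+1})"

definition Hm :: "('x \<Rightarrow> 'x \<Rightarrow> 'x multiset \<Rightarrow> real) \<Rightarrow> nat \<Rightarrow> (nat \<Rightarrow> 'x \<times> real) \<Rightarrow> nat \<Rightarrow> nat \<Rightarrow> real" where
  "Hm H n \<omega> i j = H (fst (\<omega> i)) (fst (\<omega> j)) (sampleX n \<omega>)"

definition pH :: "('x \<Rightarrow> 'x \<Rightarrow> 'x multiset \<Rightarrow> real) \<Rightarrow> nat \<Rightarrow> (nat \<Rightarrow> 'x \<times> real) \<Rightarrow> nat \<Rightarrow> nat \<Rightarrow> real" where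
  "pH H n \<omega> i j = Hm H n \<omega> i j / (\<Sum>k\<in>{1..n+1}. Hm H n \<omega> i k)"

text \<open>vbar = Q(a; Fhat), Fhat = sum_{j<=n} pH_{n+1,j} delta_{V_j} + pH_{n+1,n+1} delta_inf.\<close>
definition vbar :: "('x \<Rightarrow> 'x \<Rightarrow> 'x multiset \<Rightarrow> real) \<Rightarrow> ('x \<times> real \<Rightarrow> real) \<Rightarrow> nat \<Rightarrow> (nat \<Rightarrow> 'x \<times> real) \<Rightarrow> real \<Rightarrow> ereal" where
  "vbar H V n \<omega> a = Qf a {1..n+1} (pH H n \<omega> (n+1))
      (\<lambda>j. if j = n+1 then \<infinity> else ereal (V (\<omega> j)))"

definition v1 :: "('x \<Rightarrow> 'x \<Rightarrow> 'x multiset \<Rightarrow> real) \<Rightarrow> ('x \<times> real \<Rightarrow> real) \<Rightarrow> nat \<Rightarrow> (nat \<Rightarrow> 'x \<times> real) \<Rightarrow> real \<Rightarrow> nat \<Rightarrow> ereal" where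
  "v1 H V n \<omega> a i = Qf a {1..n+1} (pH H n \<omega> i)
      (\<lambda>j. if j = n+1 then vbar H V n \<omega> a else ereal (V (\<omega> j)))"

definition v2 :: "('x \<Rightarrow> 'x \<Rightarrow> 'x multiset \<Rightarrow> real) \<Rightarrow> ('x \<times> real \<Rightarrow> real) \<Rightarrow> nat \<Rightarrow> (nat \<Rightarrow> 'x \<times> real) \<Rightarrow> real \<Rightarrow> nat \<Rightarrow> ereal" where
  "v2 H V n \<omega> a i = Qf a {1..n+1} (pH H n \<omega> i)
      (\<lambda>j. if j = n+1 then 0 else ereal (V (\<omega> j)))"

definition G2 :: "('x \<Rightarrow> 'x \<Rightarrow> 'x multiset \<Rightarrow> real) \<Rightarrow> ('x \<times> real \<Rightarrow> real) \<Rightarrow> nat \<Rightarrow> real \<Rightarrow> (nat \<Rightarrow> 'x \<times> real) \<Rightarrow> real \<Rightarrow> bool" where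
  "G2 H V n \<alpha> \<omega> a \<longleftrightarrow>
     real (card {i\<in>{1..n}. ereal (V (\<omega> i)) \<le> v1 H V n \<omega> a i}) / real (n+1) \<ge> \<alpha> \<and>
     real (card {i\<in>{1..n}. ereal (V (\<omega> i)) \<le> v2 H V n \<omega> a i}) / real (n+1) + 1 / real (n+1) \<ge> \<alpha>"

definition admissible :: "('x \<Rightarrow> 'x \<Rightarrow> 'x multiset \<Rightarrow> real) \<Rightarrow> ('x \<times> real \<Rightarrow> real) \<Rightarrow> nat \<Rightarrow> real \<Rightarrow> (nat \<Rightarrow> 'x \<times> real) \<Rightarrow> real \<Rightarrow> bool" where
  "admissible H V n \<alpha> \<omega> a \<longleftrightarrow> vbar H V n \<omega> a = \<infinity> \<or> G2 H V n \<alpha> \<omega> a"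

definition alpha_tilde :: "('x \<Rightarrow> 'x \<Rightarrow> 'x multiset \<Rightarrow> real) \<Rightarrow> ('x \<times> real \<Rightarrow> real) \<Rightarrow> nat \<Rightarrow> real \<Rightarrow> (nat \<Rightarrow> real) \<Rightarrow> nat \<Rightarrow> (nat \<Rightarrow> 'x \<times> real) \<Rightarrow> real" where
  "alpha_tilde H V n \<alpha> agrid M \<omega> =
     agrid (LEAST m. m \<in> {1..M} \<and> admissible H V n \<alpha> \<omega> (agrid m))"

definition conf_set :: "('x \<Rightarrow> 'x \<Rightarrow> 'x multiset \<Rightarrow> real) \<Rightarrow> ('x \<times> real \<Rightarrow> real) \<Rightarrow> nat \<Rightarrow> real \<Rightarrow> (nat \<Rightarrow> real) \<Rightarrow> nat \<Rightarrow> (nat \<Rightarrow> 'x \<times> real) \<Rightarrow> real set" where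
  "conf_set H V n \<alpha> agrid M \<omega> =
     {y. ereal (V (fst (\<omega> (n+1)), y)) \<le> vbar H V n \<omega> (alpha_tilde H V n \<alpha> agrid M \<omega>)}"

end

theory Submission
  imports Defs
begin

text \<open>Coverage is compared with that of an oracle which also sees the test score. At grid
  level \<open>a\<close>, call \<open>Z\<^sub>k\<close> covered if \<open>V\<^sub>k\<close> is at most the \<open>a\<close>-quantile of the localized
  distribution of all \<open>n + 1\<close> scores around \<open>X\<^sub>k\<close>, and let the oracle level be the smallest grid
  level at which at least \<open>\<alpha>(n + 1)\<close> points are covered. The oracle treats the data points
  symmetrically, so for an i.i.d. sample the events "\<open>Z\<^sub>k\<close> is covered at the oracle level" are
  exchangeable; since at least \<open>\<alpha>(n + 1)\<close> of them always occur, each has probability at least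
  \<open>\<alpha>\<close>. When the selected level \<open>alpha_tilde\<close> has a finite \<open>vbar\<close>, condition (G2) bounds the number
  of covered points at that level from below, so the oracle level is at most \<open>alpha_tilde\<close>, and a
  test point covered at the oracle level lies in the confidence set.\<close>

lemma wcdf_mono:
  assumes "\<forall>j\<in>I. 0 \<le> w j" "s \<le> t"
  shows "wcdf I w v s \<le> wcdf I w v t"
  unfolding wcdf_def using assms by (intro sum_mono) (auto intro: order_trans)

lemma wcdf_antimono_atoms:
  assumes "\<forall>j\<in>I. 0 \<le> w j" "\<forall>j\<in>I. v j \<le> v' j"
  shows "wcdf I w v' t \<le> wcdf I w v t"
  unfolding wcdf_def using assms by (intro sum_mono) (auto intro: order_trans)

lemma wcdf_le_sum:
  assumes "\<forall>j\<in>I. 0 \<le> w j"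
  shows "wcdf I w v t \<le> sum w I"
  unfolding wcdf_def using assms by (intro sum_mono) auto

lemma wcdf_infinity: "wcdf I w v \<infinity> = sum w I"
  unfolding wcdf_def by simp

lemma Qf_le: "a \<le> wcdf I w v t \<Longrightarrow> Qf a I w v \<le> t"
  unfolding Qf_def by (simp add: Inf_lower)

lemma Qf_mono_level: "a \<le> a' \<Longrightarrow> Qf a I w v \<le> Qf a' I w v"
  unfolding Qf_def by (intro Inf_superset_mono) auto

lemma Qf_mono_atoms:
  assumes "\<forall>j\<in>I. 0 \<le> w j" "\<forall>j\<in>I. v j \<le> v' j"
  shows "Qf a I w v \<le> Qf a I w v'"
  unfolding Qf_def using wcdf_antimono_atoms[OF assms]
  by (intro Inf_superset_mono) (auto intro: order_trans)

lemma Qf_reindex: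
  assumes "bij_betw \<sigma> I I" "\<forall>j\<in>I. w' j = w (\<sigma> j) \<and> v' j = v (\<sigma> j)"
  shows "Qf a I w' v' = Qf a I w v"
proof -
  have "wcdf I w' v' t = wcdf I w v t" for t
    unfolding wcdf_def
      sum.reindex_bij_betw[OF assms(1), of "\<lambda>j. if v j \<le> t then w j else 0", symmetric]
    using assms(2) by (intro sum.cong) auto
  then show ?thesis unfolding Qf_def by simp
qed

text \<open>The infimum defining the quantile is attained: the distribution function is a
  right-continuous step function with finitely many jumps.\<close>
lemma wcdf_Qf_ge:
  assumes "finite I" "\<forall>j\<in>I. 0 \<le> w j" "a \<le> sum w I"
  shows "a \<le> wcdf I w v (Qf a I w v)"
proof -
  define S where "S = {t. a \<le> wcdf I w v t}"
  define s where "s = Inf S"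
  have "\<infinity> \<in> S" using assms(3) by (simp add: S_def wcdf_infinity)
  obtain t where "t \<in> S" "s \<le> t" and no_atom_between: "\<forall>j\<in>I. v j \<le> t \<longrightarrow> v j \<le> s"
  proof (cases "s = \<infinity>")
    case True
    then show thesis using \<open>\<infinity> \<in> S\<close> by (intro that) auto
  next
    case False
    define m where "m = Min (insert \<infinity> {v j |j. j \<in> I \<and> s < v j})"
    have "s < m" using assms(1) False by (auto simp: m_def)
    then obtain t where t: "t \<in> S" "t < m" by (auto simp: s_def Inf_less_iff)
    have "\<forall>j\<in>I. v j \<le> t \<longrightarrow> v j \<le> s"
    proof (intro ballI impI)
      fix j assume "j \<in> I" "v j \<le> t"
      moreover have "s < v j \<Longrightarrow> m \<le> v j"
        using \<open>j \<in> I\<close> assms(1) unfolding m_def by (intro Min_le) auto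
      ultimately show "v j \<le> s" using t(2) by (meson not_le order.strict_trans2 order_less_irrefl)
    qed
    then show thesis using t(1) by (intro that) (auto simp: s_def Inf_lower)
  qed
  then have "wcdf I w v t = wcdf I w v s"
    unfolding wcdf_def by (intro sum.cong) (auto intro: order_trans)
  then show ?thesis using \<open>t \<in> S\<close> by (simp add: S_def s_def Qf_def)
qed

lemma Qf_le_iff:
  assumes "finite I" "\<forall>j\<in>I. 0 \<le> w j" "t \<noteq> \<infinity>"
  shows "Qf a I w v \<le> t \<longleftrightarrow> a \<le> wcdf I w v t"
proof
  assume le: "Qf a I w v \<le> t"
  show "a \<le> wcdf I w v t"
  proof (cases "a \<le> sum w I")
    case True
    then show ?thesis
      using wcdf_Qf_ge[OF assms(1,2) True, of v] wcdf_mono[OF assms(2) le, of v] by linarith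
  next
    case False
    then have "{t. a \<le> wcdf I w v t} = {}"
      using wcdf_le_sum[OF assms(2), of v] by (auto simp: not_le intro: order.strict_trans1)
    then show ?thesis using le assms(3) by (simp add: Qf_def top_ereal_def)
  qed
qed (rule Qf_le)

lemma le_Qf_iff:
  assumes "finite I" "\<forall>j\<in>I. 0 \<le> w j" "a \<le> sum w I"
  shows "x \<le> Qf a I w v \<longleftrightarrow> (\<forall>t<x. wcdf I w v t < a)"
  using Qf_le[of a I w v] wcdf_Qf_ge[OF assms, of v]
  by (meson leI order.strict_trans2 order_less_irrefl)

lemma le_Qf_replace_atom:
  assumes "finite I" "\<forall>j\<in>I. 0 \<le> w j" "a \<le> sum w I"
    and "\<forall>j\<in>I - {i}. v j = v' j" "x \<le> v i" "x \<le> v' i"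
  shows "x \<le> Qf a I w v \<longleftrightarrow> x \<le> Qf a I w v'"
proof -
  have "wcdf I w v t = wcdf I w v' t" if "t < x" for t
  proof (unfold wcdf_def, intro sum.cong refl)
    fix j assume "j \<in> I"
    then have "v j \<le> t \<longleftrightarrow> v' j \<le> t"
      using assms(4-6) that by (cases "j = i") (auto dest: order.strict_trans2)
    then show "(if v j \<le> t then w j else 0) = (if v' j \<le> t then w j else 0)" by simp
  qed
  then show ?thesis using le_Qf_iff[OF assms(1-3)] by simp
qed

lemma borel_measurable_Qf:
  assumes "finite I" "\<forall>x\<in>space M. \<forall>j\<in>I. 0 \<le> w x j"
    and "\<And>j. j \<in> I \<Longrightarrow> (\<lambda>x. w x j) \<in> borel_measurable M"
    and "\<And>j. j \<in> I \<Longrightarrow> (\<lambda>x. v x j) \<in> borel_measurable M"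
  shows "(\<lambda>x. Qf a I (w x) (v x)) \<in> borel_measurable M"
proof (rule borel_measurableI_le)
  fix y :: ereal
  have [measurable]: "(\<lambda>x. wcdf I (w x) (v x) y) \<in> borel_measurable M"
    unfolding wcdf_def using assms(3,4) by measurable
  show "{x\<in>space M. Qf a I (w x) (v x) \<le> y} \<in> sets M"
  proof (cases "y = \<infinity>")
    case False
    then have "{x\<in>space M. Qf a I (w x) (v x) \<le> y} = {x\<in>space M. a \<le> wcdf I (w x) (v x) y}"
      using Qf_le_iff[OF assms(1)] assms(2) by auto
    then show ?thesis by simp
  qed simp
qed

lemma (in prob_space) prob_ge_of_exchangeable_count:
  fixes c :: real
  assumes "finite J" "k0 \<in> J"
    and events: "\<And>k. k \<in> J \<Longrightarrow> G k \<in> events"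
    and exchangeable: "\<And>k. k \<in> J \<Longrightarrow> prob (G k) = prob (G k0)"
    and count: "\<And>\<omega>. \<omega> \<in> space M \<Longrightarrow> c * card J \<le> card {k\<in>J. \<omega> \<in> G k}"
  shows "c \<le> prob (G k0)"
proof -
  have indicator_sum: "(\<Sum>k\<in>J. indicator (G k) \<omega>) = real (card {k\<in>J. \<omega> \<in> G k})" for \<omega>
    using assms(1) by (simp add: indicator_def sum.inter_filter[symmetric] Int_def)
  have "c * card J = (\<integral>\<omega>. c * card J \<partial>M)" by (simp add: prob_space)
  also have "\<dots> \<le> (\<integral>\<omega>. (\<Sum>k\<in>J. indicator (G k) \<omega>) \<partial>M)"
  proof (rule integral_mono)
    show "integrable M (\<lambda>\<omega>. \<Sum>k\<in>J. indicator (G k) \<omega> :: real)"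
      using events by (intro Bochner_Integration.integrable_sum) (simp add: less_top[symmetric])
  qed (use count in \<open>auto simp: indicator_sum\<close>)
  also have "\<dots> = (\<Sum>k\<in>J. prob (G k))"
    using events
    by (subst Bochner_Integration.integral_sum) (auto simp: less_top[symmetric] Int_absorb2)
  also have "\<dots> = prob (G k0) * card J"
    using exchangeable by simp
  finally have "c * card J \<le> prob (G k0) * card J" .
  moreover have "0 < real (card J)" using assms(1,2) by (auto simp: card_gt_0_iff)
  ultimately show ?thesis by (rule mult_right_le_imp_le)
qed

lemma measure_PiM_permute:
  assumes "prob_space P" "bij_betw \<sigma> J J" "A \<in> sets (PiM J (\<lambda>_. P))"
  shows "measure (PiM J (\<lambda>_. P)) ((\<lambda>\<omega>. \<lambda>j\<in>J. \<omega> (\<sigma> j)) -` A \<inter> space (PiM J (\<lambda>_. P)))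
    = measure (PiM J (\<lambda>_. P)) A"
proof -
  have \<sigma>: "inj_on \<sigma> J" "\<sigma> \<in> J \<rightarrow> J" using assms(2) by (auto simp: bij_betw_def)
  have "(\<lambda>\<omega>. \<lambda>j\<in>J. \<omega> (\<sigma> j)) \<in> measurable (PiM J (\<lambda>_. P)) (PiM J (\<lambda>_. P))"
    using \<sigma>(2) by (intro measurable_restrict measurable_component_singleton) auto
  moreover have "distr (PiM J (\<lambda>_. P)) (PiM J (\<lambda>_. P)) (\<lambda>\<omega>. \<lambda>j\<in>J. \<omega> (\<sigma> j)) = PiM J (\<lambda>_. P)"
    using distr_PiM_reindex[of J "\<lambda>_. P" \<sigma> J] assms(1) \<sigma> by simp
  ultimately show ?thesis using measure_distr assms(3) by metis
qed

lemma borel_measurable_card_Collect: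
  assumes "finite S" "\<And>k. k \<in> S \<Longrightarrow> Measurable.pred M (P k)"
  shows "(\<lambda>x. real (card {k\<in>S. P k x})) \<in> borel_measurable M"
proof -
  have "real (card {k\<in>S. P k x}) = (\<Sum>k\<in>S. if P k x then 1 else 0)" for x
    using assms(1) by (simp add: sum.inter_filter[symmetric])
  then show ?thesis using assms(2) by simp
qed

lemma card_Collect_permute:
  assumes "finite J" "bij_betw \<sigma> J J"
  shows "card {k\<in>J. Q (\<sigma> k)} = card {k\<in>J. Q k}"
  using sum.reindex_bij_betw[OF assms(2), of "\<lambda>k. if Q k then 1 else 0 :: nat"] assms(1)
  by (simp add: sum.inter_filter[symmetric])

lemma sampleX_permute:
  assumes "bij_betw \<sigma> {1..n+1} {1..n+1}" "\<forall>k\<in>{1..n+1}. \<omega>' k = \<omega> (\<sigma> k)"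
  shows "sampleX n \<omega>' = sampleX n \<omega>"
proof -
  have "sampleX n \<omega>' = image_mset (\<lambda>k. fst (\<omega> k)) (image_mset \<sigma> (mset_set {1..n+1}))"
    unfolding sampleX_def multiset.map_comp o_def using assms(2) by (intro image_mset_cong) simp
  also have "image_mset \<sigma> (mset_set {1..n+1}) = mset_set {1..n+1}"
    using assms(1) by (simp add: image_mset_mset_set bij_betw_def)
  finally show ?thesis unfolding sampleX_def .
qed

lemma pH_permute:
  assumes "bij_betw \<sigma> {1..n+1} {1..n+1}" "\<forall>k\<in>{1..n+1}. \<omega>' k = \<omega> (\<sigma> k)"
    and "i \<in> {1..n+1}" "j \<in> {1..n+1}"
  shows "pH H n \<omega>' i j = pH H n \<omega> (\<sigma> i) (\<sigma> j)"
proof -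
  have Hm: "Hm H n \<omega>' i l = Hm H n \<omega> (\<sigma> i) (\<sigma> l)" if "l \<in> {1..n+1}" for l
    unfolding Hm_def sampleX_permute[OF assms(1,2)] using assms(2,3) that by simp
  have "(\<Sum>l\<in>{1..n+1}. Hm H n \<omega>' i l) = (\<Sum>l\<in>{1..n+1}. Hm H n \<omega> (\<sigma> i) l)"
    using sum.reindex_bij_betw[OF assms(1), of "Hm H n \<omega> (\<sigma> i)"] Hm by simp
  then show ?thesis unfolding pH_def using Hm[OF assms(4)] by simp
qed

locale localized_scores =
  fixes H :: "'x \<Rightarrow> 'x \<Rightarrow> 'x multiset \<Rightarrow> real"
    and V :: "'x \<times> real \<Rightarrow> real"
    and n :: nat
  assumes localizer: "is_localizer H"
    and V_nonneg: "\<And>z. 0 \<le> V z"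
begin

abbreviation J :: "nat set" where "J \<equiv> {1..n+1}"

lemma pH_nonneg: "0 \<le> pH H n \<omega> i j"
  using localizer unfolding is_localizer_def pH_def Hm_def by (simp add: sum_nonneg)

lemma sum_pH: "i \<in> J \<Longrightarrow> (\<Sum>j\<in>J. pH H n \<omega> i j) = 1"
proof -
  assume "i \<in> J"
  then have "1 \<le> (\<Sum>j\<in>J. Hm H n \<omega> i j)"
    using localizer member_le_sum[of i J "Hm H n \<omega> i"] unfolding is_localizer_def Hm_def by auto
  then show ?thesis unfolding pH_def by (simp add: sum_divide_distrib[symmetric])
qed

definition oracle_quantile :: "real \<Rightarrow> (nat \<Rightarrow> 'x \<times> real) \<Rightarrow> nat \<Rightarrow> ereal" where
  "oracle_quantile a \<omega> k = Qf a J (pH H n \<omega> k) (\<lambda>j. ereal (V (\<omega> j)))"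

definition n_covered :: "real \<Rightarrow> (nat \<Rightarrow> 'x \<times> real) \<Rightarrow> nat" where
  "n_covered a \<omega> = card {k\<in>J. ereal (V (\<omega> k)) \<le> oracle_quantile a \<omega> k}"

lemma le_vbar_iff_le_oracle_quantile:
  assumes "a \<le> 1"
  shows "ereal (V (\<omega> (n+1))) \<le> vbar H V n \<omega> a \<longleftrightarrow>
    ereal (V (\<omega> (n+1))) \<le> oracle_quantile a \<omega> (n+1)"
  unfolding vbar_def oracle_quantile_def
  using assms pH_nonneg sum_pH[of "n+1"] by (intro le_Qf_replace_atom[where i="n+1"]) auto

lemma v1_le_oracle_quantile:
  "vbar H V n \<omega> a \<le> ereal (V (\<omega> (n+1))) \<Longrightarrow> v1 H V n \<omega> a i \<le> oracle_quantile a \<omega> i"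
  unfolding v1_def oracle_quantile_def using pH_nonneg by (intro Qf_mono_atoms) auto

lemma v2_le_oracle_quantile: "v2 H V n \<omega> a i \<le> oracle_quantile a \<omega> i"
  unfolding v2_def oracle_quantile_def using pH_nonneg V_nonneg by (intro Qf_mono_atoms) auto

text \<open>Whether or not the test point is covered, one of the two counts in (G2) bounds the
  number of points covered by their oracle quantiles.\<close>
lemma n_covered_ge_if_G2:
  assumes "a \<le> 1" "G2 H V n \<alpha> \<omega> a"
  shows "\<alpha> * (n+1) \<le> n_covered a \<omega>"
proof -
  define S where "S = {k\<in>{1..n}. ereal (V (\<omega> k)) \<le> oracle_quantile a \<omega> k}"
  have count_mono: "card {i\<in>{1..n}. ereal (V (\<omega> i)) \<le> v i} \<le> card S"
    if "\<And>i. v i \<le> oracle_quantile a \<omega> i" for v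
    unfolding S_def using that by (intro card_mono) (auto intro: order_trans)
  show ?thesis
  proof (cases "ereal (V (\<omega> (n+1))) \<le> vbar H V n \<omega> a")
    case True
    then have "{k\<in>J. ereal (V (\<omega> k)) \<le> oracle_quantile a \<omega> k} = insert (n+1) S"
      using le_vbar_iff_le_oracle_quantile[OF assms(1)] by (auto simp: S_def)
    then have "n_covered a \<omega> = card S + 1" by (simp add: n_covered_def S_def)
    moreover have "\<alpha> * (n+1) \<le> card {i\<in>{1..n}. ereal (V (\<omega> i)) \<le> v2 H V n \<omega> a i} + 1"
      using assms(2) by (simp add: G2_def field_simps add_divide_distrib[symmetric])
    ultimately show ?thesis using count_mono[OF v2_le_oracle_quantile] by linarith
  next
    case False
    then have "card {i\<in>{1..n}. ereal (V (\<omega> i)) \<le> v1 H V n \<omega> a i} \<le> card S"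
      using v1_le_oracle_quantile by (intro count_mono) simp
    moreover have "card S \<le> n_covered a \<omega>"
      unfolding n_covered_def S_def by (intro card_mono) auto
    moreover have "\<alpha> * (n+1) \<le> card {i\<in>{1..n}. ereal (V (\<omega> i)) \<le> v1 H V n \<omega> a i}"
      using assms(2) by (simp add: G2_def field_simps)
    ultimately show ?thesis by linarith
  qed
qed

lemma oracle_quantile_permute:
  assumes "bij_betw \<sigma> J J" "\<forall>k\<in>J. \<omega>' k = \<omega> (\<sigma> k)" "k \<in> J"
  shows "oracle_quantile a \<omega>' k = oracle_quantile a \<omega> (\<sigma> k)"
  unfolding oracle_quantile_def using assms pH_permute[OF assms(1,2) assms(3)]
  by (intro Qf_reindex[OF assms(1)]) auto

lemma n_covered_permute:
  assumes "bij_betw \<sigma> J J" "\<forall>k\<in>J. \<omega>' k = \<omega> (\<sigma> k)"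
  shows "n_covered a \<omega>' = n_covered a \<omega>"
proof -
  have "n_covered a \<omega>' = card {k\<in>J. ereal (V (\<omega> (\<sigma> k))) \<le> oracle_quantile a \<omega> (\<sigma> k)}"
    unfolding n_covered_def using assms oracle_quantile_permute[OF assms]
    by (intro arg_cong[where f=card]) auto
  then show ?thesis unfolding n_covered_def using card_Collect_permute[OF _ assms(1)] by simp
qed

end

locale grid_oracle = localized_scores H V n
  for H :: "'x \<Rightarrow> 'x \<Rightarrow> 'x multiset \<Rightarrow> real" and V :: "'x \<times> real \<Rightarrow> real" and n :: nat +
  fixes \<alpha> :: real and agrid :: "nat \<Rightarrow> real" and M :: nat
  assumes alpha_le_1: "\<alpha> \<le> 1"
    and grid_mono: "mono_on {1..M} agrid"
    and grid_le_1: "\<And>m. m \<in> {1..M} \<Longrightarrow> agrid m \<le> 1"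
begin

definition oracle_valid :: "real \<Rightarrow> (nat \<Rightarrow> 'x \<times> real) \<Rightarrow> bool" where
  "oracle_valid a \<omega> \<longleftrightarrow> \<alpha> * (n+1) \<le> n_covered a \<omega>"

definition oracle_index :: "(nat \<Rightarrow> 'x \<times> real) \<Rightarrow> nat" where
  "oracle_index \<omega> = (LEAST m. m \<in> {1..M} \<and> oracle_valid (agrid m) \<omega>)"

definition oracle_covers :: "(nat \<Rightarrow> 'x \<times> real) \<Rightarrow> nat \<Rightarrow> bool" where
  "oracle_covers \<omega> k \<longleftrightarrow> (\<exists>m\<in>{1..M}. oracle_valid (agrid m) \<omega>) \<longrightarrow>
     ereal (V (\<omega> k)) \<le> oracle_quantile (agrid (oracle_index \<omega>)) \<omega> k"

lemma oracle_index_least: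
  assumes "m \<in> {1..M}" "oracle_valid (agrid m) \<omega>"
  shows "oracle_index \<omega> \<in> {1..M}" "oracle_valid (agrid (oracle_index \<omega>)) \<omega>" "oracle_index \<omega> \<le> m"
  using LeastI[of "\<lambda>m. m \<in> {1..M} \<and> oracle_valid (agrid m) \<omega>" m] Least_le[of _ m] assms
  unfolding oracle_index_def by auto

lemma card_oracle_covers: "\<alpha> * (n+1) \<le> card {k\<in>J. oracle_covers \<omega> k}"
proof (cases "\<exists>m\<in>{1..M}. oracle_valid (agrid m) \<omega>")
  case True
  then show ?thesis
    using oracle_index_least(2) unfolding oracle_covers_def oracle_valid_def n_covered_def by auto
next
  case False
  then have "{k\<in>J. oracle_covers \<omega> k} = J" unfolding oracle_covers_def by blast
  then show ?thesis using alpha_le_1 by simp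
qed

lemma oracle_covers_permute:
  assumes "bij_betw \<sigma> J J" "\<forall>k\<in>J. \<omega>' k = \<omega> (\<sigma> k)" "k \<in> J"
  shows "oracle_covers \<omega>' k = oracle_covers \<omega> (\<sigma> k)"
proof -
  have "oracle_valid a \<omega>' = oracle_valid a \<omega>" for a
    unfolding oracle_valid_def n_covered_permute[OF assms(1,2)] ..
  then show ?thesis
    unfolding oracle_covers_def oracle_index_def oracle_quantile_permute[OF assms]
    using assms(2,3) by simp
qed

text \<open>If (G2) holds at the chosen level, the oracle level is no larger, so the oracle quantile
  of the test point is below the chosen one.\<close>
lemma conf_set_if_oracle_covers:
  assumes "oracle_covers \<omega> (n+1)" "\<exists>m\<in>{1..M}. admissible H V n \<alpha> \<omega> (agrid m)"
  shows "snd (\<omega> (n+1)) \<in> conf_set H V n \<alpha> agrid M \<omega>"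
proof -
  define m where "m = (LEAST m. m \<in> {1..M} \<and> admissible H V n \<alpha> \<omega> (agrid m))"
  have m: "m \<in> {1..M}" "admissible H V n \<alpha> \<omega> (agrid m)"
    using LeastI_ex[of "\<lambda>m. m \<in> {1..M} \<and> admissible H V n \<alpha> \<omega> (agrid m)"] assms(2)
    unfolding m_def by blast+
  have "ereal (V (\<omega> (n+1))) \<le> vbar H V n \<omega> (agrid m)"
  proof (cases "vbar H V n \<omega> (agrid m) = \<infinity>")
    case False
    then have "oracle_valid (agrid m) \<omega>"
      using m n_covered_ge_if_G2 grid_le_1 unfolding admissible_def oracle_valid_def by blast
    note index = oracle_index_least[OF m(1) this]
    have "ereal (V (\<omega> (n+1))) \<le> oracle_quantile (agrid (oracle_index \<omega>)) \<omega> (n+1)"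
      using assms(1) index(1,2) unfolding oracle_covers_def by blast
    also have "\<dots> \<le> oracle_quantile (agrid m) \<omega> (n+1)"
      unfolding oracle_quantile_def using index m(1)
      by (intro Qf_mono_level mono_onD[OF grid_mono]) auto
    finally show ?thesis using le_vbar_iff_le_oracle_quantile grid_le_1 m(1) by blast
  qed simp
  then show ?thesis unfolding conf_set_def alpha_tilde_def m_def by simp
qed

end

locale iid_grid_oracle = grid_oracle H V n \<alpha> agrid M
  for H :: "'x \<Rightarrow> 'x \<Rightarrow> 'x multiset \<Rightarrow> real" and V n \<alpha> agrid M +
  fixes P :: "('x \<times> real) measure"
  assumes prob_space_P: "prob_space P"
    and V_measurable: "V \<in> borel_measurable P"
    and Hm_measurable: "\<And>i j. i \<in> {1..n+1} \<Longrightarrow> j \<in> {1..n+1} \<Longrightarrow>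
      (\<lambda>\<omega>. Hm H n \<omega> i j) \<in> borel_measurable (PiM {1..n+1} (\<lambda>_. P))"
begin

abbreviation sample_law :: "(nat \<Rightarrow> 'x \<times> real) measure" where
  "sample_law \<equiv> PiM J (\<lambda>_. P)"

lemma measurable_score[measurable]: "j \<in> J \<Longrightarrow> (\<lambda>\<omega>. V (\<omega> j)) \<in> borel_measurable sample_law"
  using V_measurable by measurable

lemma measurable_pH[measurable]:
  "i \<in> J \<Longrightarrow> j \<in> J \<Longrightarrow> (\<lambda>\<omega>. pH H n \<omega> i j) \<in> borel_measurable sample_law"
  unfolding pH_def using Hm_measurable by measurable

lemma measurable_localized_Qf:
  assumes "\<And>j. j \<in> J \<Longrightarrow> (\<lambda>\<omega>. v \<omega> j) \<in> borel_measurable sample_law" and "i \<in> J"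
  shows "(\<lambda>\<omega>. Qf a J (pH H n \<omega> i) (v \<omega>)) \<in> borel_measurable sample_law"
  using assms measurable_pH[OF assms(2)] pH_nonneg by (intro borel_measurable_Qf) auto

lemma measurable_oracle_quantile[measurable]:
  "k \<in> J \<Longrightarrow> (\<lambda>\<omega>. oracle_quantile a \<omega> k) \<in> borel_measurable sample_law"
  unfolding oracle_quantile_def by (rule measurable_localized_Qf) measurable

lemma measurable_vbar[measurable]: "(\<lambda>\<omega>. vbar H V n \<omega> a) \<in> borel_measurable sample_law"
  unfolding vbar_def by (rule measurable_localized_Qf) measurable

lemma measurable_v1[measurable]: "i \<in> J \<Longrightarrow> (\<lambda>\<omega>. v1 H V n \<omega> a i) \<in> borel_measurable sample_law"
  unfolding v1_def by (rule measurable_localized_Qf) measurable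

lemma measurable_v2[measurable]: "i \<in> J \<Longrightarrow> (\<lambda>\<omega>. v2 H V n \<omega> a i) \<in> borel_measurable sample_law"
  unfolding v2_def by (rule measurable_localized_Qf) measurable

lemma pred_le_oracle_quantile[measurable]:
  "k \<in> J \<Longrightarrow> Measurable.pred sample_law (\<lambda>\<omega>. ereal (V (\<omega> k)) \<le> oracle_quantile a \<omega> k)"
  unfolding pred_def by (intro borel_measurable_le) measurable

lemma pred_oracle_valid[measurable]: "Measurable.pred sample_law (oracle_valid a)"
proof -
  have [measurable]: "(\<lambda>\<omega>. real (n_covered a \<omega>)) \<in> borel_measurable sample_law"
    unfolding n_covered_def
    by (rule borel_measurable_card_Collect[OF finite_atLeastAtMost pred_le_oracle_quantile])
  show ?thesis unfolding oracle_valid_def[abs_def] by measurable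
qed

lemma pred_admissible[measurable]: "Measurable.pred sample_law (\<lambda>\<omega>. admissible H V n \<alpha> \<omega> a)"
proof -
  have v1: "Measurable.pred sample_law (\<lambda>\<omega>. ereal (V (\<omega> i)) \<le> v1 H V n \<omega> a i)"
    and v2: "Measurable.pred sample_law (\<lambda>\<omega>. ereal (V (\<omega> i)) \<le> v2 H V n \<omega> a i)"
    if "i \<in> {1..n}" for i
    using that unfolding pred_def by (intro borel_measurable_le; measurable)+
  have [measurable]:
    "(\<lambda>\<omega>. real (card {i\<in>{1..n}. ereal (V (\<omega> i)) \<le> v1 H V n \<omega> a i})) \<in> borel_measurable sample_law"
    "(\<lambda>\<omega>. real (card {i\<in>{1..n}. ereal (V (\<omega> i)) \<le> v2 H V n \<omega> a i})) \<in> borel_measurable sample_law"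
    by (rule borel_measurable_card_Collect[OF finite_atLeastAtMost]; rule v1 v2; assumption)+
  show ?thesis unfolding admissible_def G2_def by measurable
qed

lemma sets_oracle_covers:
  assumes "k \<in> J"
  shows "{\<omega>\<in>space sample_law. oracle_covers \<omega> k} \<in> sets sample_law"
proof -
  have [measurable]: "oracle_index \<in> measurable sample_law (count_space UNIV)"
    unfolding oracle_index_def[abs_def] by measurable
  have "oracle_covers \<omega> k \<longleftrightarrow> (\<exists>m\<in>{1..M}. oracle_valid (agrid m) \<omega>) \<longrightarrow>
      (\<exists>m. oracle_index \<omega> = m \<and> ereal (V (\<omega> k)) \<le> oracle_quantile (agrid m) \<omega> k)" for \<omega>
    unfolding oracle_covers_def by auto
  then show ?thesis using assms by (simp only:) measurable
qed

lemma sets_coverage_event: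
  "{\<omega>\<in>space sample_law. snd (\<omega> (n+1)) \<in> conf_set H V n \<alpha> agrid M \<omega>} \<in> sets sample_law"
proof -
  define chosen where "chosen \<omega> = (LEAST m. m \<in> {1..M} \<and> admissible H V n \<alpha> \<omega> (agrid m))" for \<omega>
  have [measurable]: "chosen \<in> measurable sample_law (count_space UNIV)"
    unfolding chosen_def[abs_def] by measurable
  have [measurable]: "Measurable.pred sample_law (\<lambda>\<omega>. ereal (V (\<omega> (n+1))) \<le> vbar H V n \<omega> a)" for a
    unfolding pred_def by (intro borel_measurable_le) measurable
  have "snd (\<omega> (n+1)) \<in> conf_set H V n \<alpha> agrid M \<omega> \<longleftrightarrow>
      (\<exists>m. chosen \<omega> = m \<and> ereal (V (\<omega> (n+1))) \<le> vbar H V n \<omega> (agrid m))" for \<omega>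
    unfolding conf_set_def alpha_tilde_def chosen_def by simp
  then show ?thesis by (simp only:) measurable
qed

lemma prob_oracle_covers_eq:
  assumes "k \<in> J"
  shows "measure sample_law {\<omega>\<in>space sample_law. oracle_covers \<omega> k}
    = measure sample_law {\<omega>\<in>space sample_law. oracle_covers \<omega> (n+1)}"
proof -
  define \<sigma> where "\<sigma> = Transposition.transpose k (n+1)"
  have \<sigma>: "bij_betw \<sigma> J J" "\<sigma> (n+1) = k" using assms by (simp_all add: \<sigma>_def)
  have \<sigma>_J: "\<sigma> j \<in> J" if "j \<in> J" for j using bij_betw_apply[OF \<sigma>(1) that] .
  define swap where "swap \<omega> = (\<lambda>j\<in>J. \<omega> (\<sigma> j))" for \<omega> :: "nat \<Rightarrow> 'x \<times> real"
  have "swap -` {\<omega>\<in>space sample_law. oracle_covers \<omega> (n+1)} \<inter> space sample_law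
      = {\<omega>\<in>space sample_law. oracle_covers \<omega> k}"
  proof -
    have "swap \<omega> \<in> space sample_law \<and> oracle_covers (swap \<omega>) (n+1) \<longleftrightarrow> oracle_covers \<omega> k"
      if "\<omega> \<in> space sample_law" for \<omega>
      using that \<sigma> \<sigma>_J oracle_covers_permute[OF \<sigma>(1), of "swap \<omega>" \<omega> "n+1"]
      by (auto simp: swap_def space_PiM PiE_iff)
    then show ?thesis by auto
  qed
  then show ?thesis
    using measure_PiM_permute[OF prob_space_P \<sigma>(1) sets_oracle_covers, of "n+1"]
    by (simp add: swap_def)
qed

theorem coverage:
  assumes "\<forall>\<omega>\<in>space sample_law. \<exists>m\<in>{1..M}. admissible H V n \<alpha> \<omega> (agrid m)"
  shows "\<alpha> \<le> measure sample_law
    {\<omega>\<in>space sample_law. snd (\<omega> (n+1)) \<in> conf_set H V n \<alpha> agrid M \<omega>}"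
proof -
  interpret prob_space sample_law using prob_space_P by (intro prob_space_PiM) auto
  define covers where "covers k = {\<omega>\<in>space sample_law. oracle_covers \<omega> k}" for k
  have "\<alpha> \<le> prob (covers (n+1))"
  proof (rule prob_ge_of_exchangeable_count[where J=J])
    show "\<alpha> * card J \<le> card {k\<in>J. \<omega> \<in> covers k}" if "\<omega> \<in> space sample_law" for \<omega>
      using card_oracle_covers[of \<omega>] that by (simp add: covers_def)
    show "covers k \<in> events" "prob (covers k) = prob (covers (n+1))" if "k \<in> J" for k
      unfolding covers_def using that by (rule sets_oracle_covers, rule prob_oracle_covers_eq)
  qed simp_all
  also have "\<dots> \<le> prob {\<omega>\<in>space sample_law. snd (\<omega> (n+1)) \<in> conf_set H V n \<alpha> agrid M \<omega>}"
    using assms conf_set_if_oracle_covers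
    by (intro finite_measure_mono[OF _ sets_coverage_event]) (auto simp: covers_def)
  finally show ?thesis .
qed

end

theorem corollary2:
  fixes P :: "('x::euclidean_space \<times> real) measure"
    and V :: "'x \<times> real \<Rightarrow> real"
    and H :: "'x \<Rightarrow> 'x \<Rightarrow> 'x multiset \<Rightarrow> real"
    and n M :: nat and \<alpha> :: real and agrid :: "nat \<Rightarrow> real"
  assumes "prob_space P" and "sets P = sets borel"
    and "V \<in> borel_measurable borel" and "\<forall>z. 0 \<le> V z"
    and "is_localizer H"
    and "\<forall>i\<in>{1..n+1}. \<forall>j\<in>{1..n+1}.
           (\<lambda>\<omega>. Hm H n \<omega> i j) \<in> borel_measurable (PiM {1..n+1} (\<lambda>_. P))"
    and "0 < \<alpha>" and "\<alpha> < 1"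
    and "1 \<le> M" and "strict_mono_on {1..M} agrid" and "0 \<le> agrid 1" and "agrid M \<le> 1"
    and "\<forall>\<omega>\<in>space (PiM {1..n+1} (\<lambda>_. P)). \<exists>m\<in>{1..M}. admissible H V n \<alpha> \<omega> (agrid m)"
  shows "\<alpha> \<le> measure (PiM {1..n+1} (\<lambda>_. P))
           {\<omega> \<in> space (PiM {1..n+1} (\<lambda>_. P)). snd (\<omega> (n+1)) \<in> conf_set H V n \<alpha> agrid M \<omega>}"
proof -
  have grid_mono: "mono_on {1..M} agrid"
    using \<open>strict_mono_on {1..M} agrid\<close> by (rule strict_mono_on_imp_mono_on)
  interpret iid_grid_oracle H V n \<alpha> agrid M P
  proof (intro iid_grid_oracle.intro grid_oracle.intro localized_scores.intro
      iid_grid_oracle_axioms.intro grid_oracle_axioms.intro)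
    show "is_localizer H" "prob_space P" "mono_on {1..M} agrid" by fact+
    show "0 \<le> V z" for z using \<open>\<forall>z. 0 \<le> V z\<close> ..
    show "\<alpha> \<le> 1" using \<open>\<alpha> < 1\<close> by simp
    show "agrid m \<le> 1" if "m \<in> {1..M}" for m
      using mono_onD[OF grid_mono, of m M] that \<open>agrid M \<le> 1\<close> by auto
    show "V \<in> borel_measurable P"
      using \<open>V \<in> borel_measurable borel\<close>
      by (subst measurable_cong_sets[OF \<open>sets P = sets borel\<close> refl])
    show "(\<lambda>\<omega>. Hm H n \<omega> i j) \<in> borel_measurable (PiM {1..n+1} (\<lambda>_. P))"
      if "i \<in> {1..n+1}" "j \<in> {1..n+1}" for i j
      using assms(6) that by blast
  qed
  show ?thesis using coverage assms(13) .
qed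

end
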